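(* Let $G=(V,E)$ be a finite connected graph, $p$ a probability vector on $V$ with $p(i)>0$ for all $i$, and consider the Markov chain on $S=(-\mathbb{N}_0)^V$ which moves from $x$ to $T_ix$ with probability $p(i)$, with transition matrix $M$. Then the equation $\pi M=\pi$ has a solution $\pi$ which is a probability distribution on $S$.
   Context: For $x\in S$ and $i\in V$, $T_ix\in S$ is obtained by first setting $x'_i=\max\{x_k:\operatorname{dist}(k,i)\le1\}+1$, $x'_j=x_j$ for $j\ne i$ (dist the graph distance), and then $(T_ix)_j=x'_j-\max_kx'_k$ (height profile after dropping a particle at $i$, seen from the maximum). *)

theory Defs
  imports "HOL-Analysis.Analysis"
begin

text \<open>Vertex set V is the finite type 'v (V = UNIV); the graph is given by a
symmetric irreflexive adjacency relation E. dist(k,i) \<le> 1 iff k = i or E k i.\<close>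

definition state_space :: "('v \<Rightarrow> int) set" where
  "state_space = {x. \<forall>j. x j \<le> 0}"

definition drop_particle ::
  "('v \<Rightarrow> 'v \<Rightarrow> bool) \<Rightarrow> 'v::finite \<Rightarrow> ('v \<Rightarrow> int) \<Rightarrow> ('v \<Rightarrow> int)" where
  "drop_particle E i x =
     (let x' = x(i := Max {x k | k. k = i \<or> E k i} + 1)
      in (\<lambda>j. x' j - Max (range x')))"

definition transition ::
  "('v \<Rightarrow> 'v \<Rightarrow> bool) \<Rightarrow> ('v::finite \<Rightarrow> real) \<Rightarrow> ('v \<Rightarrow> int) \<Rightarrow> ('v \<Rightarrow> int) \<Rightarrow> real" where
  "transition E p x y = (\<Sum>i\<in>{i. drop_particle E i x = y}. p i)"

end

(*
  A closed walk through every vertex, performed twice, is a synchronizing word for the drops: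
  after the first pass the maximum sits at the end point of the walk, and the second pass
  then raises every column to that maximum plus the position of its last visit, so the
  profile seen from the maximum no longer depends on the starting configuration.  Since
  all p(i) > 0, the L-step chain (L the length of the word) plays this word with a
  probability \<beta> > 0 independent of the state, and then lands on the fixed profile c.
  A kernel that regenerates at c in this way has as stationary law the chain started at c
  and run for a geometric number of steps; averaging over one period gives a stationary
  law of the one-step chain.
*)
theory Submission
  imports Defs "HOL-Probability.Probability_Mass_Function"
begin

section \<open>Random iterated maps with a synchronizing word\<close>

fun kernel_pow :: "('a \<Rightarrow> 'a pmf) \<Rightarrow> nat \<Rightarrow> 'a \<Rightarrow> 'a pmf" where
  "kernel_pow K 0 = return_pmf"
| "kernel_pow K (Suc n) = (\<lambda>x. bind_pmf (kernel_pow K n x) K)"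

lemma pmf_split_atom:
  fixes M :: "'a pmf"
  shows "\<exists>C. M = bind_pmf (bernoulli_pmf (pmf M w)) (\<lambda>b. if b then return_pmf w else C)"
proof (cases "set_pmf M \<subseteq> {w}")
  case True
  then have "M = return_pmf w"
    by (simp add: set_pmf_subset_singleton)
  moreover have "bernoulli_pmf 1 = return_pmf True"
    by (intro pmf_eqI) (simp add: indicator_def split: bool.split)
  ultimately show ?thesis
    by (simp add: bind_return_pmf)
next
  case False
  then have rest_pos: "set_pmf M \<inter> - {w} \<noteq> {}"
    by blast
  have rest: "measure M (- {w}) = 1 - pmf M w"
    using measure_pmf.prob_compl[of "{w}" M] by (simp add: measure_pmf_single Compl_eq_Diff_UNIV)
  have "M = bind_pmf (bernoulli_pmf (pmf M w)) (\<lambda>b. if b then return_pmf w else cond_pmf M (- {w}))"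
  proof (rule pmf_eqI)
    fix z
    have "pmf M w < 1"
      using rest rest_pos measure_pmf_posI[of _ M "- {w}"] by auto
    then show "pmf M z = pmf (bind_pmf (bernoulli_pmf (pmf M w))
                 (\<lambda>b. if b then return_pmf w else cond_pmf M (- {w}))) z"
      by (auto simp: pmf_bind pmf_cond[OF rest_pos] rest pmf_le_1)
  qed
  then show ?thesis
    by blast
qed

text \<open>The stationary law is that of the chain started at c and run with R for a
  geometrically distributed number of steps.\<close>

lemma stationary_pmf_of_regeneration:
  fixes K :: "'a \<Rightarrow> 'a pmf"
  assumes \<beta>: "\<beta> \<in> {0<..1}"
    and K: "\<And>x. K x = bind_pmf (bernoulli_pmf \<beta>) (\<lambda>b. if b then return_pmf c else R x)"
  shows "\<exists>\<pi>. bind_pmf \<pi> K = \<pi>"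
proof -
  define \<mu> where "\<mu> k = ((\<lambda>m. bind_pmf m R) ^^ k) (return_pmf c)" for k
  define \<pi> where "\<pi> = bind_pmf (geometric_pmf \<beta>) \<mu>"
  have step: "bind_pmf (\<mu> k) K = bind_pmf (bernoulli_pmf \<beta>) (\<lambda>b. if b then return_pmf c else \<mu> (Suc k))"
    for k
  proof -
    have "bind_pmf (\<mu> k) K
        = bind_pmf (bernoulli_pmf \<beta>) (\<lambda>b. bind_pmf (\<mu> k) (\<lambda>x. if b then return_pmf c else R x))"
      by (subst bind_commute_pmf) (rule bind_pmf_cong[OF refl K])
    also have "\<dots> = bind_pmf (bernoulli_pmf \<beta>) (\<lambda>b. if b then return_pmf c else \<mu> (Suc k))"
      by (rule bind_pmf_cong[OF refl]) (simp add: \<mu>_def)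
    finally show ?thesis .
  qed
  have "bind_pmf \<pi> K = bind_pmf (geometric_pmf \<beta>) (\<lambda>k. bind_pmf (bernoulli_pmf \<beta>)
          (\<lambda>b. if b then return_pmf c else \<mu> (Suc k)))"
    by (simp add: \<pi>_def bind_assoc_pmf step)
  also have "\<dots> = bind_pmf (bernoulli_pmf \<beta>)
      (\<lambda>b. if b then return_pmf c else bind_pmf (geometric_pmf \<beta>) (\<lambda>k. \<mu> (Suc k)))"
    by (subst bind_commute_pmf) (rule bind_pmf_cong[OF refl], simp)
  also have "\<dots> = \<pi>"
    unfolding \<pi>_def using \<beta>
    by (subst (2) geometric_bind_pmf_unfold)
       (simp_all add: bind_assoc_pmf bind_return_pmf bind_map_pmf \<mu>_def if_distrib if_distribR cong: if_cong)
  finally show ?thesis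
    by blast
qed

lemma stationary_pmf_of_kernel_pow:
  assumes "L > 0" and stationary: "bind_pmf \<pi> (kernel_pow K L) = \<pi>"
  shows "\<exists>\<pi>'. bind_pmf \<pi>' K = \<pi>'"
proof -
  define g where "g j = bind_pmf \<pi> (kernel_pow K j)" for j
  define \<pi>' where "\<pi>' = bind_pmf (pmf_of_set {..<L}) g"
  have g_Suc: "bind_pmf (g j) K = g (Suc j)" for j
    by (simp add: g_def bind_assoc_pmf)
  have g_period: "g L = g 0"
    by (simp add: g_def stationary bind_return_pmf')
  have "pmf (bind_pmf \<pi>' K) y = pmf \<pi>' y" for y
  proof -
    have "(\<Sum>j<L. pmf (g (Suc j)) y) = (\<Sum>j<L. pmf (g j) y)"
      using sum.lessThan_Suc_shift[of "\<lambda>j. pmf (g j) y" L] sum.lessThan_Suc[of "\<lambda>j. pmf (g j) y" L]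
      by (simp add: g_period)
    then show ?thesis
      using \<open>L > 0\<close> unfolding \<pi>'_def bind_assoc_pmf g_Suc
      by (subst (1 2) pmf_bind_pmf_of_set) auto
  qed
  then show ?thesis
    by (blast intro: pmf_eqI)
qed

fun iid_words :: "'i pmf \<Rightarrow> nat \<Rightarrow> 'i list pmf" where
  "iid_words P 0 = return_pmf []"
| "iid_words P (Suc n) = bind_pmf (iid_words P n) (\<lambda>w. map_pmf (\<lambda>i. w @ [i]) P)"

lemma kernel_pow_random_map:
  "kernel_pow (\<lambda>x. map_pmf (\<lambda>i. f i x) P) n x = map_pmf (\<lambda>w. fold f w x) (iid_words P n)"
  by (induction n) (simp_all add: bind_map_pmf map_bind_pmf map_pmf_comp)

lemma in_set_pmf_iid_words:
  "set w \<subseteq> set_pmf P \<Longrightarrow> w \<in> set_pmf (iid_words P (length w))"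
proof (induction w rule: rev_induct)
  case (snoc i w)
  then show ?case
    by simp blast
qed simp

lemma stationary_pmf_of_synchronizing_word:
  fixes f :: "'i \<Rightarrow> 'a \<Rightarrow> 'a"
  assumes "w \<noteq> []" and "set w \<subseteq> set_pmf P" and sync: "\<And>x. fold f w x = c"
  shows "\<exists>\<pi>. bind_pmf \<pi> (\<lambda>x. map_pmf (\<lambda>i. f i x) P) = \<pi>"
proof -
  define K where "K = (\<lambda>x. map_pmf (\<lambda>i. f i x) P)"
  define \<beta> where "\<beta> = pmf (iid_words P (length w)) w"
  have "\<beta> \<in> {0<..1}"
    using in_set_pmf_iid_words[OF \<open>set w \<subseteq> set_pmf P\<close>]
    by (simp add: \<beta>_def pmf_positive pmf_le_1)
  obtain C where C: "iid_words P (length w)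
      = bind_pmf (bernoulli_pmf \<beta>) (\<lambda>b. if b then return_pmf w else C)"
    using pmf_split_atom[of "iid_words P (length w)" w] unfolding \<beta>_def by (elim exE)
  have "kernel_pow K (length w) x = bind_pmf (bernoulli_pmf \<beta>)
          (\<lambda>b. if b then return_pmf c else map_pmf (\<lambda>v. fold f v x) C)" for x
    unfolding K_def kernel_pow_random_map C map_bind_pmf
    by (rule bind_pmf_cong[OF refl]) (simp add: sync)
  then have "\<exists>\<pi>. bind_pmf \<pi> (kernel_pow K (length w)) = \<pi>"
    by (rule stationary_pmf_of_regeneration[OF \<open>\<beta> \<in> {0<..1}\<close>])
  then obtain \<pi> where "bind_pmf \<pi> (kernel_pow K (length w)) = \<pi>" ..
  with \<open>w \<noteq> []\<close> have "\<exists>\<pi>. bind_pmf \<pi> K = \<pi>"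
    by (intro stationary_pmf_of_kernel_pow) auto
  then show ?thesis
    unfolding K_def .
qed

lemma has_sum_of_nn_integral:
  fixes f :: "'a \<Rightarrow> real"
  assumes nonneg: "\<And>x. f x \<ge> 0" and "v \<ge> 0"
    and integral: "(\<integral>\<^sup>+x. ennreal (f x) \<partial>count_space UNIV) = ennreal v"
  shows "(f has_sum v) UNIV"
proof -
  have "integrable (count_space UNIV) f"
    using nonneg integral by (intro integrableI_nonneg) auto
  then have summable: "Infinite_Set_Sum.abs_summable_on f UNIV"
    by (simp add: abs_summable_on_def)
  have "infsetsum f UNIV = v"
    using nonneg integral \<open>v \<ge> 0\<close> by (subst infsetsum_conv_nn_integral) auto
  then have "infsum f UNIV = v"
    using infsetsum_infsum[OF summable] by simp
  moreover have "f summable_on UNIV"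
    using summable abs_summable_equivalent abs_summable_summable by blast
  ultimately show ?thesis
    using has_sum_infsum by blast
qed

lemma has_sum_zero_outside:
  "(f has_sum s) UNIV \<Longrightarrow> (\<And>x. x \<notin> A \<Longrightarrow> f x = 0) \<Longrightarrow> (f has_sum s) A"
  by (subst has_sum_cong_neutral[where T = UNIV and g = f]) auto

lemma has_sum_pmf: "(pmf M has_sum 1) UNIV"
  by (rule has_sum_of_nn_integral) (simp_all add: nn_integral_pmf)

lemma has_sum_pmf_bind: "((\<lambda>x. pmf M x * pmf (K x) y) has_sum pmf (bind_pmf M K) y) UNIV"
proof (rule has_sum_of_nn_integral)
  show "(\<integral>\<^sup>+x. ennreal (pmf M x * pmf (K x) y) \<partial>count_space UNIV) = ennreal (pmf (bind_pmf M K) y)"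
    by (simp add: ennreal_pmf_bind nn_integral_measure_pmf ennreal_mult'')
qed simp_all

section \<open>A synchronizing word for the particle drops\<close>

lemma Max_image_diff_const:
  "finite S \<Longrightarrow> S \<noteq> {} \<Longrightarrow> Max ((\<lambda>x. f x - c) ` S) = Max (f ` S) - (c::'a::linordered_ab_group_add)"
  using Max_add_commute[of S f "- c"] by simp

definition deposit :: "('v \<Rightarrow> 'v \<Rightarrow> bool) \<Rightarrow> 'v::finite \<Rightarrow> ('v \<Rightarrow> int) \<Rightarrow> ('v \<Rightarrow> int)" where
  "deposit E i x = x(i := Max (x ` {k. k = i \<or> E k i}) + 1)"

definition relative_to_max :: "('v::finite \<Rightarrow> int) \<Rightarrow> ('v \<Rightarrow> int)" where
  "relative_to_max z = (\<lambda>j. z j - Max (range z))"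

lemma drop_particle_eq_relative_to_max_deposit:
  "drop_particle E i x = relative_to_max (deposit E i x)"
proof -
  have "{x k | k. k = i \<or> E k i} = x ` {k. k = i \<or> E k i}"
    by blast
  then show ?thesis
    by (simp add: drop_particle_def deposit_def relative_to_max_def)
qed

lemma drop_particle_in_state_space: "drop_particle E i x \<in> state_space"
  unfolding drop_particle_eq_relative_to_max_deposit relative_to_max_def state_space_def
  by simp

lemma deposit_diff_const: "deposit E i (\<lambda>j. z j - c) = (\<lambda>j. deposit E i z j - c)"
  unfolding deposit_def by (subst Max_image_diff_const) auto

lemma relative_to_max_diff_const: "relative_to_max (\<lambda>j. z j - c) = relative_to_max z"
  unfolding relative_to_max_def by (subst Max_image_diff_const) auto

lemma fold_drop_particle_relative_to_max:
  "fold (drop_particle E) w (relative_to_max z) = relative_to_max (fold (deposit E) w z)"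
proof (induction w arbitrary: z)
  case (Cons i w)
  have "drop_particle E i (relative_to_max z) = relative_to_max (deposit E i z)"
    unfolding drop_particle_eq_relative_to_max_deposit relative_to_max_def[of z]
    by (simp only: deposit_diff_const relative_to_max_diff_const)
  then show ?case
    by (simp add: Cons.IH)
qed simp

lemma fold_drop_particle_eq_relative_to_max:
  "w \<noteq> [] \<Longrightarrow> fold (drop_particle E) w x = relative_to_max (fold (deposit E) w x)"
  by (cases w) (simp_all add: drop_particle_eq_relative_to_max_deposit fold_drop_particle_relative_to_max)

fun walk :: "('v \<Rightarrow> 'v \<Rightarrow> bool) \<Rightarrow> 'v \<Rightarrow> 'v list \<Rightarrow> bool" where
  "walk E a [] = True"
| "walk E a (b # l) = ((a = b \<or> E a b) \<and> walk E b l)"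

lemma walk_append: "walk E a (l @ m) \<longleftrightarrow> walk E a l \<and> walk E (last (a # l)) m"
  by (induction l arbitrary: a) auto

lemma rtranclp_imp_walk: "E\<^sup>*\<^sup>* a b \<Longrightarrow> \<exists>l. walk E a l \<and> last (a # l) = b"
proof (induction rule: rtranclp_induct)
  case base
  show ?case
    by (rule exI[of _ "[]"]) simp
next
  case (step b c)
  then obtain l where "walk E a l" "last (a # l) = b"
    by blast
  with step show ?case
    by (intro exI[of _ "l @ [c]"]) (simp add: walk_append)
qed

lemma closed_walk_through_all:
  fixes E :: "'v::finite \<Rightarrow> 'v \<Rightarrow> bool"
  assumes connected: "\<And>i j. E\<^sup>*\<^sup>* i j"
  shows "\<exists>l. walk E r l \<and> set l = UNIV \<and> last (r # l) = r"
proof -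
  have "\<exists>l. walk E r l \<and> insert r A \<subseteq> set l \<and> last (r # l) = r" if "finite A" for A
    using that
  proof (induction A rule: finite_induct)
    case empty
    show ?case
      by (rule exI[of _ "[r]"]) simp
  next
    case (insert v A)
    then obtain l where l: "walk E r l" "insert r A \<subseteq> set l" "last (r # l) = r"
      by blast
    obtain l1 where l1: "walk E r l1" "last (r # l1) = v"
      using rtranclp_imp_walk[OF connected] by blast
    obtain l2 where l2: "walk E v l2" "last (v # l2) = r"
      using rtranclp_imp_walk[OF connected] by blast
    have "v \<in> set (r # l1)"
      using l1(2) by (metis last_in_set list.distinct(1))
    with l l1 l2 show ?case
      by (intro exI[of _ "l @ l1 @ l2"]) (auto simp: walk_append last_append)
  qed
  from this[OF finite] obtain l where "walk E r l" "UNIV \<subseteq> set l" "last (r # l) = r"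
    by blast
  then show ?thesis
    by (intro exI[of _ l]) auto
qed

lemma deposit_at_ge: "a = i \<or> E a i \<Longrightarrow> x a + 1 \<le> deposit E i x i"
  unfolding deposit_def by (auto intro: Max_ge)

lemma deposit_at_max: "a = i \<or> E a i \<Longrightarrow> \<forall>j. x j \<le> x a \<Longrightarrow> deposit E i x i = x a + 1"
  unfolding deposit_def by (subst Max_eqI[of _ "x a"]) auto

lemma fold_deposit_walk_end_max:
  "walk E a l \<Longrightarrow> \<forall>j\<in>S. x j \<le> x a \<Longrightarrow>
   \<forall>j\<in>S \<union> set l. fold (deposit E) l x j \<le> fold (deposit E) l x (last (a # l))"
proof (induction l arbitrary: a x S)
  case (Cons i l)
  then have "x a + 1 \<le> deposit E i x i"
    by (simp add: deposit_at_ge)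
  with Cons.prems(2) have "\<forall>j\<in>insert i S. deposit E i x j \<le> deposit E i x i"
    by (auto simp: deposit_def)
  with Cons.IH[of i "insert i S"] Cons.prems show ?case
    by auto
qed simp

text \<open>For j in l, the 1-based position of the last occurrence of j in l.\<close>

fun last_visit :: "'a list \<Rightarrow> 'a \<Rightarrow> int" where
  "last_visit [] j = 0"
| "last_visit (b # l) j = (if j \<in> set l then 1 + last_visit l j else 1)"

lemma fold_deposit_walk_from_max:
  "walk E a l \<Longrightarrow> \<forall>j. x j \<le> x a \<Longrightarrow>
   fold (deposit E) l x = (\<lambda>j. if j \<in> set l then x a + last_visit l j else x j)"
proof (induction l arbitrary: a x)
  case (Cons i l)
  then have deposit: "deposit E i x = x(i := x a + 1)"
    using deposit_at_max[of a i E x] by (simp add: deposit_def)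
  have "\<forall>j. deposit E i x j \<le> deposit E i x i"
    using Cons.prems(2) by (simp add: deposit) (smt (verit))
  with Cons.IH[of i] Cons.prems show ?case
    by (auto simp: deposit)
qed simp

lemma drop_particle_synchronizing_word:
  fixes E :: "'v::finite \<Rightarrow> 'v \<Rightarrow> bool"
  assumes connected: "\<And>i j. E\<^sup>*\<^sup>* i j"
  shows "\<exists>w c. w \<noteq> [] \<and> (\<forall>x. fold (drop_particle E) w x = c)"
proof -
  fix r :: 'v
  obtain l where l: "walk E r l" "set l = UNIV" "last (r # l) = r"
    using closed_walk_through_all[OF connected] by blast
  have "fold (drop_particle E) (l @ l) x = relative_to_max (last_visit l)" for x
  proof -
    define y where "y = fold (deposit E) l x"
    have "\<forall>j. y j \<le> y r"
      using fold_deposit_walk_end_max[OF l(1), of "{}" x] l(2,3) by (simp add: y_def)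
    then have deposits: "fold (deposit E) (l @ l) x = (\<lambda>j. last_visit l j - - y r)"
      using fold_deposit_walk_from_max[OF l(1)] l(2) by (simp add: y_def add.commute)
    have "fold (drop_particle E) (l @ l) x = relative_to_max (fold (deposit E) (l @ l) x)"
      using l(2) by (intro fold_drop_particle_eq_relative_to_max) auto
    also have "\<dots> = relative_to_max (last_visit l)"
      unfolding deposits by (rule relative_to_max_diff_const)
    finally show ?thesis .
  qed
  moreover have "l @ l \<noteq> []"
    using l(2) by auto
  ultimately show ?thesis
    by blast
qed

lemma transition_eq_pmf_map:
  "transition E (pmf P) x y = pmf (map_pmf (\<lambda>i. drop_particle E i x) P) y"
  by (simp add: transition_def pmf_map vimage_def measure_measure_pmf_finite)

theorem mainTheorem4:
  fixes E :: "'v::finite \<Rightarrow> 'v \<Rightarrow> bool" and p :: "'v \<Rightarrow> real"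
  assumes sym: "\<And>i j. E i j \<Longrightarrow> E j i"
    and irrefl: "\<And>i. \<not> E i i"
    and connected: "\<And>i j. E\<^sup>*\<^sup>* i j"
    and p_pos: "\<And>i. p i > 0"
    and p_sum: "(\<Sum>i\<in>UNIV. p i) = 1"
  shows "\<exists>\<pi> :: ('v \<Rightarrow> int) \<Rightarrow> real.
           (\<forall>x\<in>state_space. \<pi> x \<ge> 0) \<and>
           (\<pi> has_sum 1) state_space \<and>
           (\<forall>y\<in>state_space.
              ((\<lambda>x. \<pi> x * transition E p x y) has_sum \<pi> y) state_space)"
proof -
  define P where "P = embed_pmf p"
  have pmf_P: "pmf P = p"
    unfolding P_def using p_pos p_sum
    by (intro ext pmf_embed_pmf) (auto simp: less_imp_le nn_integral_count_space_finite)
  define K where "K x = map_pmf (\<lambda>i. drop_particle E i x) P" for x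
  obtain w c where w: "w \<noteq> []" "\<forall>x. fold (drop_particle E) w x = c"
    using drop_particle_synchronizing_word[OF connected] by blast
  have "set w \<subseteq> set_pmf P"
    using p_pos[THEN less_imp_neq, THEN not_sym] by (auto simp: set_pmf_iff pmf_P)
  from stationary_pmf_of_synchronizing_word[OF w(1) this w(2)[rule_format]]
  obtain \<pi> where stationary: "bind_pmf \<pi> K = \<pi>"
    unfolding K_def by blast
  have "set_pmf (bind_pmf \<pi> K) \<subseteq> state_space"
    by (auto simp: K_def drop_particle_in_state_space)
  then have outside: "pmf \<pi> x = 0" if "x \<notin> state_space" for x
    using that unfolding stationary by (auto simp: set_pmf_iff)
  have transition: "transition E p x y = pmf (K x) y" for x y
    unfolding K_def pmf_P[symmetric] by (rule transition_eq_pmf_map)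
  have "((\<lambda>x. pmf \<pi> x * transition E p x y) has_sum pmf \<pi> y) state_space" for y
    using has_sum_pmf_bind[of \<pi> K y, unfolded stationary transition[symmetric]]
    by (rule has_sum_zero_outside) (simp add: outside)
  moreover have "(pmf \<pi> has_sum 1) state_space"
    using has_sum_pmf outside by (rule has_sum_zero_outside)
  ultimately show ?thesis
    by (intro exI[of _ "pmf \<pi>"]) simp
qed

end
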